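(* Let $\mathcal{C}$ be a class of finite graphs for which there is a natural number $N$ such that every set of pairwise disjoint edges (edges $\{a_i,b_i\}$, $i=1,\dots,k$, with all $a_1,\dots,a_k,b_1,\dots,b_k$ distinct) in every member of $\mathcal{C}$ has size at most $N$. Then $\mathcal{C}$ is well quasi-ordered under both the standard and the strong homomorphic image orderings.
   Context: A graph is a set with a symmetric binary edge relation. A homomorphism maps edges to edges; it is strong if additionally every edge of the target among vertices of the image is the image of an edge. Standard homomorphic image ordering: $A\preceq B$ iff there is a surjective homomorphism $B\to A$; strong: iff there is a surjective strong homomorphism $B\to A$. Well quasi-ordered means no infinite strictly decreasing sequence and no infinite antichain; structures considered up to isomorphism. *)

theory Defs
  imports Main
begin

text \<open>A graph is a vertex set together with a symmetric binary edge relation on it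
  (loops are not excluded, following the paper's definition).\<close>
type_synonym 'a graph = "'a set \<times> ('a \<times> 'a) set"

definition verts :: "'a graph \<Rightarrow> 'a set" where "verts G = fst G"
definition edges :: "'a graph \<Rightarrow> ('a \<times> 'a) set" where "edges G = snd G"

definition is_graph :: "'a graph \<Rightarrow> bool" where
  "is_graph G \<longleftrightarrow> edges G \<subseteq> verts G \<times> verts G \<and> sym (edges G)"

definition finite_graph :: "'a graph \<Rightarrow> bool" where
  "finite_graph G \<longleftrightarrow> is_graph G \<and> finite (verts G)"

definition graph_hom :: "('a \<Rightarrow> 'a) \<Rightarrow> 'a graph \<Rightarrow> 'a graph \<Rightarrow> bool" where
  "graph_hom f G H \<longleftrightarrow> f ` verts G \<subseteq> verts H \<and>
     (\<forall>(x, y) \<in> edges G. (f x, f y) \<in> edges H)"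

definition strong_graph_hom :: "('a \<Rightarrow> 'a) \<Rightarrow> 'a graph \<Rightarrow> 'a graph \<Rightarrow> bool" where
  "strong_graph_hom f G H \<longleftrightarrow> graph_hom f G H \<and>
     (\<forall>(u, v) \<in> edges H. u \<in> f ` verts G \<and> v \<in> f ` verts G \<longrightarrow>
        (\<exists>x y. (x, y) \<in> edges G \<and> f x = u \<and> f y = v))"

definition hom_image_le :: "'a graph \<Rightarrow> 'a graph \<Rightarrow> bool" where
  "hom_image_le A B \<longleftrightarrow> (\<exists>f. graph_hom f B A \<and> f ` verts B = verts A)"

definition strong_hom_image_le :: "'a graph \<Rightarrow> 'a graph \<Rightarrow> bool" where
  "strong_hom_image_le A B \<longleftrightarrow> (\<exists>f. strong_graph_hom f B A \<and> f ` verts B = verts A)"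

definition wqo_on_class :: "('b \<Rightarrow> 'b \<Rightarrow> bool) \<Rightarrow> 'b set \<Rightarrow> bool" where
  "wqo_on_class le C \<longleftrightarrow>
     (\<nexists>g :: nat \<Rightarrow> 'b. (\<forall>i. g i \<in> C) \<and>
         (\<forall>i. le (g (Suc i)) (g i) \<and> \<not> le (g i) (g (Suc i)))) \<and>
     (\<nexists>g :: nat \<Rightarrow> 'b. (\<forall>i. g i \<in> C) \<and>
         (\<forall>i j. i \<noteq> j \<longrightarrow> \<not> le (g i) (g j)))"

definition disjoint_edge_set :: "'a graph \<Rightarrow> ('a \<times> 'a) set \<Rightarrow> bool" where
  "disjoint_edge_set G M \<longleftrightarrow> M \<subseteq> edges G \<and> (\<forall>(a, b) \<in> M. a \<noteq> b) \<and>
     (\<forall>p \<in> M. \<forall>q \<in> M. p \<noteq> q \<longrightarrow> {fst p, snd p} \<inter> {fst q, snd q} = {})"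

end

theory Submission
  imports Defs "HOL.Topological_Spaces" "HOL-Library.Infinite_Set"
begin

text \<open>Let the endpoints of a maximum set of pairwise disjoint edges, at most \<open>2N\<close> vertices,
  be enumerated as \<open>e 0, \<dots>, e (k - 1)\<close>. They meet every non-loop edge, so a vertex outside
  this cover is described, as far as edges are concerned, by its type: the set of indices of
  its neighbours in the cover and whether it carries a loop. If two graphs \<open>A\<close>, \<open>B\<close> have
  covers of the same size spanning the same pattern of edges, the same nonempty type classes,
  and every type class of \<open>A\<close> is at most as large as that of \<open>B\<close>, then mapping the cover of \<open>B\<close> to
  that of \<open>A\<close> index by index and each type class of \<open>B\<close> onto that of \<open>A\<close> is a surjective strong homomorphism.
  In any sequence of graphs from the class only finitely many cover data occur, so pigeonhole
  and Dickson's lemma for the class sizes give \<open>i < j\<close> with \<open>g i\<close> a strong homomorphic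
  image of \<open>g j\<close>; hence there are no infinite antichains.

  There are no infinite strictly descending chains either: a surjective homomorphism that does
  not decrease the number of vertices is bijective on vertices and injective on edges, and if it
  does not increase the number of edges its inverse is a surjective strong homomorphism. So
  along a strictly descending chain \<open>(|V|, |V|\<^sup>2 - |E|)\<close> decreases lexicographically.\<close>

subsection \<open>Monotone and constant subsequences\<close>

lemma decseq_nat_eventually_const:
  fixes a :: "nat \<Rightarrow> nat"
  assumes "decseq a"
  obtains n where "\<And>m. n \<le> m \<Longrightarrow> a m = a n"
proof -
  obtain n where n: "a n = (LEAST x. x \<in> range a)"
    using LeastI[of "\<lambda>x. x \<in> range a" "a 0"] by auto
  have "a m = a n" if "n \<le> m" for m
  proof (rule antisym)
    show "a m \<le> a n" using assms that by (rule decseqD)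
    show "a n \<le> a m" unfolding n by (rule Least_le) simp
  qed
  then show thesis by (rule that)
qed

lemma nat_seq_incseq_subseq:
  fixes a :: "nat \<Rightarrow> nat"
  obtains r where "strict_mono r" "incseq (a \<circ> r)"
proof -
  obtain f where f: "strict_mono f" "monoseq (a \<circ> f)"
    using seq_monosub[of a] by (auto simp: comp_def)
  show thesis
  proof (cases "incseq (a \<circ> f)")
    case True
    with f(1) show thesis by (rule that)
  next
    case False
    with f(2) have "decseq (a \<circ> f)" by (simp add: monoseq_iff)
    then obtain n where n: "\<And>m. n \<le> m \<Longrightarrow> (a \<circ> f) m = (a \<circ> f) n"
      using decseq_nat_eventually_const by blast
    have "strict_mono (\<lambda>m. f (m + n))"
      using f(1) by (simp add: strict_mono_def)
    moreover have "incseq (a \<circ> (\<lambda>m. f (m + n)))"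
      using n[of "_ + n"] by (simp add: incseq_def)
    ultimately show thesis by (rule that)
  qed
qed

lemma finite_nat_seqs_incseq_subseq:
  fixes s :: "nat \<Rightarrow> 'b \<Rightarrow> nat"
  assumes "finite K"
  shows "\<exists>r. strict_mono r \<and> (\<forall>x\<in>K. incseq (\<lambda>n. s (r n) x))"
  using assms
proof (induction K rule: finite_induct)
  case empty
  show ?case using strict_mono_id by blast
next
  case (insert x K)
  then obtain r where r: "strict_mono r" "\<forall>y\<in>K. incseq (\<lambda>n. s (r n) y)"
    by blast
  obtain r' where r': "strict_mono r'" "incseq ((\<lambda>n. s (r n) x) \<circ> r')"
    by (rule nat_seq_incseq_subseq)
  have "incseq (\<lambda>n. s (r (r' n)) y)" if "y \<in> K" for y
    using r(2) that strict_mono_mono[OF r'(1)] by (auto simp: incseq_def mono_def)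
  then have "\<forall>y\<in>insert x K. incseq (\<lambda>n. s ((r \<circ> r') n) y)"
    using r'(2) by (auto simp: comp_def)
  moreover have "strict_mono (r \<circ> r')"
    using r(1) r'(1) by (simp add: strict_mono_def)
  ultimately show ?case by blast
qed

lemma dickson:
  fixes s :: "nat \<Rightarrow> 'b \<Rightarrow> nat"
  assumes "finite K"
  shows "\<exists>i j. i < j \<and> (\<forall>x\<in>K. s i x \<le> s j x)"
proof -
  obtain r where "strict_mono r" "\<forall>x\<in>K. incseq (\<lambda>n. s (r n) x)"
    using finite_nat_seqs_incseq_subseq[OF assms] by blast
  then have "r 0 < r 1" "\<forall>x\<in>K. s (r 0) x \<le> s (r 1) x"
    by (auto simp: strict_mono_def incseq_def)
  then show ?thesis by blast
qed

lemma strict_mono_const_subseq: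
  assumes "finite (range h)"
  obtains r :: "nat \<Rightarrow> nat" where "strict_mono r" "\<And>n. h (r n) = h (r 0)"
proof -
  obtain n0 where "infinite {n. h n = h n0}"
    using pigeonhole_infinite[of UNIV h] assms by auto
  then obtain r :: "nat \<Rightarrow> nat" where r: "strict_mono r" "\<And>n. h (r n) = h n0"
    using infinite_enumerate by blast
  then show thesis by (intro that[OF r(1)]) (simp add: r(2))
qed

subsection \<open>Covers by the endpoints of disjoint edges\<close>

lemma finite_graph_finite_edges:
  assumes "finite_graph G"
  shows "finite (edges G)"
  using assms finite_subset[of "edges G" "verts G \<times> verts G"]
  by (auto simp: finite_graph_def is_graph_def)

definition vertex_cover :: "'a graph \<Rightarrow> 'a set \<Rightarrow> bool" where
  "vertex_cover G S \<longleftrightarrow> S \<subseteq> verts G \<and> (\<forall>(x, y) \<in> edges G. x \<noteq> y \<longrightarrow> x \<in> S \<or> y \<in> S)"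

lemma vertex_cover_of_disjoint_edge_bound:
  assumes "finite_graph G" and bound: "\<And>M. disjoint_edge_set G M \<Longrightarrow> card M \<le> N"
  obtains S where "vertex_cover G S" "card S \<le> 2 * N"
proof -
  have "finite (edges G)" using assms(1) by (rule finite_graph_finite_edges)
  have "disjoint_edge_set G {}" by (simp add: disjoint_edge_set_def)
  then obtain M where M: "disjoint_edge_set G M"
    and M_max: "\<And>M'. disjoint_edge_set G M' \<Longrightarrow> card M' \<le> card M"
    using ex_has_greatest_nat[of "disjoint_edge_set G" "{}" card "Suc N"] bound by fastforce
  then have "finite M"
    using \<open>finite (edges G)\<close> by (auto simp: disjoint_edge_set_def intro: finite_subset)
  define S where "S = fst ` M \<union> snd ` M"
  have "card S \<le> card M + card M"
    unfolding S_def using card_Un_le card_image_le[OF \<open>finite M\<close>] by (metis add_mono order_trans)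
  then have "card S \<le> 2 * N" using bound[OF M] by linarith
  moreover have "x \<in> S \<or> y \<in> S" if xy: "(x, y) \<in> edges G" "x \<noteq> y" for x y
  proof (rule ccontr)
    assume "\<not> (x \<in> S \<or> y \<in> S)"
    then have "disjoint_edge_set G (insert (x, y) M)" and "(x, y) \<notin> M"
      using M xy by (auto simp: disjoint_edge_set_def S_def image_iff)
    then show False
      using M_max[of "insert (x, y) M"] \<open>finite M\<close> by simp
  qed
  moreover have "S \<subseteq> verts G"
    using M assms(1) by (auto simp: S_def disjoint_edge_set_def finite_graph_def is_graph_def)
  ultimately show thesis by (intro that) (auto simp: vertex_cover_def)
qed

definition enumerated_cover :: "'a graph \<Rightarrow> (nat \<Rightarrow> 'a) \<Rightarrow> nat \<Rightarrow> bool" where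
  "enumerated_cover G e k \<longleftrightarrow> inj_on e {..<k} \<and> vertex_cover G (e ` {..<k})"

lemma enumerated_cover_exists:
  assumes "finite_graph G" and "\<And>M. disjoint_edge_set G M \<Longrightarrow> card M \<le> N"
  obtains e k where "enumerated_cover G e k" "k \<le> 2 * N"
proof -
  obtain S where S: "vertex_cover G S" "card S \<le> 2 * N"
    using vertex_cover_of_disjoint_edge_bound assms by blast
  then have "finite S"
    using assms(1) by (auto simp: vertex_cover_def finite_graph_def intro: finite_subset)
  then obtain e where "bij_betw e {..<card S} S"
    using ex_bij_betw_nat_finite by (metis atLeast0LessThan)
  with S show thesis
    by (intro that[of e "card S"]) (auto simp: enumerated_cover_def bij_betw_def)
qed

definition cover_pattern :: "'a graph \<Rightarrow> (nat \<Rightarrow> 'a) \<Rightarrow> nat \<Rightarrow> (nat \<times> nat) set" where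
  "cover_pattern G e k = {(i, j). i < k \<and> j < k \<and> (e i, e j) \<in> edges G}"

text \<open>A vertex outside the cover can only be adjacent to cover vertices and to itself.\<close>

definition cover_type :: "'a graph \<Rightarrow> (nat \<Rightarrow> 'a) \<Rightarrow> nat \<Rightarrow> 'a \<Rightarrow> nat set \<times> bool" where
  "cover_type G e k v = ({i. i < k \<and> (v, e i) \<in> edges G}, (v, v) \<in> edges G)"

definition cover_type_class :: "'a graph \<Rightarrow> (nat \<Rightarrow> 'a) \<Rightarrow> nat \<Rightarrow> nat set \<times> bool \<Rightarrow> 'a set" where
  "cover_type_class G e k T = {v \<in> verts G - e ` {..<k}. cover_type G e k v = T}"

subsection \<open>Class-preserving maps\<close>

lemma ex_image_eq_if_card_le:
  assumes "finite X" "finite Y" "card Y \<le> card X" "Y = {} \<Longrightarrow> X = {}"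
  obtains h where "h ` X = Y"
proof (cases "Y = {}")
  case True
  with assms(4) show thesis by (intro that) simp
next
  case False
  then obtain y0 where y0: "y0 \<in> Y" by blast
  obtain g where g: "g ` Y \<subseteq> X" "inj_on g Y"
    using card_le_inj[OF assms(2,1,3)] by blast
  define h where "h x = (if x \<in> g ` Y then inv_into Y g x else y0)" for x
  have "h ` X \<subseteq> Y" using y0 by (auto simp: h_def inv_into_into)
  moreover have "y \<in> h ` X" if "y \<in> Y" for y
    using that g by (intro image_eqI[of _ _ "g y"]) (auto simp: h_def)
  ultimately show thesis by (intro that) blast
qed

locale same_cover_pattern =
  fixes A B :: "'a graph" and eA eB :: "nat \<Rightarrow> 'a" and k :: nat
  assumes graph_A: "is_graph A" and graph_B: "is_graph B"
    and cover_A: "enumerated_cover A eA k" and cover_B: "enumerated_cover B eB k"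
    and same_pattern: "cover_pattern A eA k = cover_pattern B eB k"
begin

definition class_preserving :: "('a \<Rightarrow> 'a) \<Rightarrow> bool" where
  "class_preserving f \<longleftrightarrow> (\<forall>i<k. f (eB i) = eA i) \<and>
     (\<forall>T. f ` cover_type_class B eB k T = cover_type_class A eA k T)"

lemma class_preserving_noncover:
  assumes "class_preserving f" "v \<in> verts B" "v \<notin> eB ` {..<k}"
  shows "f v \<in> verts A - eA ` {..<k}" "cover_type A eA k (f v) = cover_type B eB k v"
proof -
  have "v \<in> cover_type_class B eB k (cover_type B eB k v)"
    using assms(2,3) by (simp add: cover_type_class_def)
  then have "f v \<in> f ` cover_type_class B eB k (cover_type B eB k v)"
    by (rule imageI)
  also have "\<dots> = cover_type_class A eA k (cover_type B eB k v)"
    using assms(1) unfolding class_preserving_def by blast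
  finally have "f v \<in> cover_type_class A eA k (cover_type B eB k v)" .
  then show "f v \<in> verts A - eA ` {..<k}" "cover_type A eA k (f v) = cover_type B eB k v"
    by (auto simp: cover_type_class_def)
qed

lemma class_preserving_cover_iff:
  assumes "class_preserving f" "v \<in> verts B"
  shows "f v \<in> eA ` {..<k} \<longleftrightarrow> v \<in> eB ` {..<k}"
proof
  assume "f v \<in> eA ` {..<k}"
  then show "v \<in> eB ` {..<k}" using class_preserving_noncover(1)[OF assms] by blast
next
  assume "v \<in> eB ` {..<k}"
  then obtain i where "i < k" "v = eB i" by blast
  then show "f v \<in> eA ` {..<k}" using assms(1) by (simp add: class_preserving_def)
qed

lemma class_preserving_onto:
  assumes "class_preserving f"
  shows "f ` verts B = verts A"
proof
  show "f ` verts B \<subseteq> verts A"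
  proof
    fix u assume "u \<in> f ` verts B"
    then obtain v where v: "v \<in> verts B" "u = f v" by blast
    show "u \<in> verts A"
    proof (cases "v \<in> eB ` {..<k}")
      case True
      then obtain i where "i < k" "u = eA i"
        using assms v by (auto simp: class_preserving_def)
      then show ?thesis
        using cover_A by (auto simp: enumerated_cover_def vertex_cover_def)
    next
      case False
      then show ?thesis using class_preserving_noncover(1)[OF assms v(1)] v(2) by blast
    qed
  qed
  show "verts A \<subseteq> f ` verts B"
  proof
    fix u assume u: "u \<in> verts A"
    show "u \<in> f ` verts B"
    proof (cases "u \<in> eA ` {..<k}")
      case True
      then obtain i where "i < k" "u = f (eB i)"
        using assms by (auto simp: class_preserving_def)
      moreover have "eB i \<in> verts B" if "i < k" for i
        using that cover_B by (auto simp: enumerated_cover_def vertex_cover_def)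
      ultimately show ?thesis by blast
    next
      case False
      with u have "u \<in> cover_type_class A eA k (cover_type A eA k u)"
        by (simp add: cover_type_class_def)
      also have "\<dots> = f ` cover_type_class B eB k (cover_type A eA k u)"
        using assms unfolding class_preserving_def by blast
      also have "\<dots> \<subseteq> f ` verts B"
        by (auto simp: cover_type_class_def)
      finally show ?thesis .
    qed
  qed
qed

text \<open>Only edges between two distinct vertices outside the cover are not controlled by the
  pattern and the types, and those exist in neither graph.\<close>

lemma class_preserving_edge_iff:
  assumes f: "class_preserving f" and xy: "x \<in> verts B" "y \<in> verts B"
    and controlled: "x \<in> eB ` {..<k} \<or> y \<in> eB ` {..<k} \<or> x = y"
  shows "(f x, f y) \<in> edges A \<longleftrightarrow> (x, y) \<in> edges B"
proof -
  have symA: "sym (edges A)" and symB: "sym (edges B)"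
    using graph_A graph_B by (auto simp: is_graph_def)
  have f_cover: "f (eB i) = eA i" if "i < k" for i
    using f that by (simp add: class_preserving_def)
  have mixed: "(f v, eA i) \<in> edges A \<longleftrightarrow> (v, eB i) \<in> edges B"
    if "i < k" "v \<in> verts B" "v \<notin> eB ` {..<k}" for v i
    using class_preserving_noncover(2)[OF f that(2,3)] that(1)
    by (auto simp: cover_type_def)
  consider (cover) i j where "i < k" "j < k" "x = eB i" "y = eB j"
    | (left) i where "i < k" "x = eB i" "y \<notin> eB ` {..<k}"
    | (right) j where "j < k" "y = eB j" "x \<notin> eB ` {..<k}"
    | (loop) "x = y" "x \<notin> eB ` {..<k}"
    using controlled by blast
  then show ?thesis
  proof cases
    case cover
    have "(i, j) \<in> cover_pattern A eA k \<longleftrightarrow> (i, j) \<in> cover_pattern B eB k"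
      using same_pattern by simp
    with cover f_cover show ?thesis by (simp add: cover_pattern_def)
  next
    case left
    then show ?thesis
      using mixed[of i y] xy f_cover symA symB by (auto dest: symD)
  next
    case right
    then show ?thesis
      using mixed[of j x] xy f_cover by auto
  next
    case loop
    then show ?thesis
      using class_preserving_noncover(2)[OF f xy(1)] by (auto simp: cover_type_def)
  qed
qed

lemma strong_graph_hom_if_class_preserving:
  assumes f: "class_preserving f"
  shows "strong_graph_hom f B A"
proof -
  have subA: "edges A \<subseteq> verts A \<times> verts A" and subB: "edges B \<subseteq> verts B \<times> verts B"
    using graph_A graph_B by (auto simp: is_graph_def)
  have coverA: "x \<in> eA ` {..<k} \<or> y \<in> eA ` {..<k} \<or> x = y" if "(x, y) \<in> edges A" for x y
    using cover_A that by (auto simp: enumerated_cover_def vertex_cover_def)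
  have coverB: "x \<in> eB ` {..<k} \<or> y \<in> eB ` {..<k} \<or> x = y" if "(x, y) \<in> edges B" for x y
    using cover_B that by (auto simp: enumerated_cover_def vertex_cover_def)
  have "(f x, f y) \<in> edges A" if "(x, y) \<in> edges B" for x y
    using class_preserving_edge_iff[OF f _ _ coverB] that subB by blast
  then have "graph_hom f B A"
    using class_preserving_onto[OF f] by (auto simp: graph_hom_def)
  moreover have "\<exists>x y. (x, y) \<in> edges B \<and> f x = u \<and> f y = w" if "(u, w) \<in> edges A" for u w
  proof -
    define g where "g = inv_into (verts B) f"
    have onto: "f ` verts B = verts A" by (rule class_preserving_onto[OF f])
    have uw: "u \<in> verts A" "w \<in> verts A" using that subA by auto
    then have g: "g u \<in> verts B" "g w \<in> verts B" "f (g u) = u" "f (g w) = w"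
      using onto by (auto simp: g_def inv_into_into f_inv_into_f)
    have "g u \<in> eB ` {..<k} \<or> g w \<in> eB ` {..<k} \<or> g u = g w"
      using coverA[OF that] class_preserving_cover_iff[OF f] g by metis
    then have "(g u, g w) \<in> edges B"
      using class_preserving_edge_iff[OF f g(1,2)] g(3,4) that by simp
    with g(3,4) show ?thesis by blast
  qed
  ultimately show ?thesis
    unfolding strong_graph_hom_def by blast
qed

lemma class_preserving_exists:
  assumes finite: "finite (verts A)" "finite (verts B)"
    and card_le: "\<And>T. card (cover_type_class A eA k T) \<le> card (cover_type_class B eB k T)"
    and empty: "\<And>T. cover_type_class A eA k T = {} \<Longrightarrow> cover_type_class B eB k T = {}"
  obtains f where "class_preserving f"
proof -
  have "\<exists>h. h ` cover_type_class B eB k T = cover_type_class A eA k T" for T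
  proof -
    have "finite (cover_type_class B eB k T)" "finite (cover_type_class A eA k T)"
      using finite by (auto simp: cover_type_class_def)
    then obtain h where "h ` cover_type_class B eB k T = cover_type_class A eA k T"
      using ex_image_eq_if_card_le card_le empty by metis
    then show ?thesis by blast
  qed
  then obtain h where h: "\<And>T. h T ` cover_type_class B eB k T = cover_type_class A eA k T"
    by metis
  define f where "f v = (if v \<in> eB ` {..<k} then eA (the_inv_into {..<k} eB v)
                         else h (cover_type B eB k v) v)" for v
  have inj: "inj_on eB {..<k}" using cover_B by (simp add: enumerated_cover_def)
  have "f (eB i) = eA i" if "i < k" for i
    using that inj by (simp add: f_def the_inv_into_f_f)
  moreover have "f ` cover_type_class B eB k T = h T ` cover_type_class B eB k T" for T
    by (intro image_cong) (auto simp: f_def cover_type_class_def)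
  ultimately show thesis
    using h by (intro that[of f]) (simp add: class_preserving_def)
qed

lemma strong_hom_image_le_if_class_card_le:
  assumes "finite (verts A)" "finite (verts B)"
    and "\<And>T. card (cover_type_class A eA k T) \<le> card (cover_type_class B eB k T)"
    and "\<And>T. cover_type_class A eA k T = {} \<Longrightarrow> cover_type_class B eB k T = {}"
  shows "strong_hom_image_le A B"
proof -
  obtain f where "class_preserving f"
    using class_preserving_exists assms by blast
  then show ?thesis
    unfolding strong_hom_image_le_def
    using strong_graph_hom_if_class_preserving class_preserving_onto by blast
qed

end

lemma strong_hom_image_le_good_pair:
  fixes g :: "nat \<Rightarrow> 'a graph"
  assumes fin: "\<And>n. finite_graph (g n)"
    and bound: "\<And>n M. disjoint_edge_set (g n) M \<Longrightarrow> card M \<le> N"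
  obtains i j where "i < j" "strong_hom_image_le (g i) (g j)"
proof -
  have "\<exists>e k. enumerated_cover (g n) e k \<and> k \<le> 2 * N" for n
    using enumerated_cover_exists[OF fin[of n] bound[of n]] by metis
  then obtain e k where cover: "\<And>n. enumerated_cover (g n) (e n) (k n)" "\<And>n. k n \<le> 2 * N"
    by metis
  define tclass where "tclass n = cover_type_class (g n) (e n) (k n)" for n
  define types :: "(nat set \<times> bool) set" where "types = Pow {..<2 * N} \<times> UNIV"
  have tclass_outside_types: "tclass n T = {}" if "T \<notin> types" for n T
    using that cover(2)[of n] by (auto simp: tclass_def cover_type_class_def cover_type_def types_def)
  define key where "key n = (k n, cover_pattern (g n) (e n) (k n), {T. tclass n T \<noteq> {}})" for n
  have "key n \<in> {..2 * N} \<times> Pow ({..<2 * N} \<times> {..<2 * N}) \<times> Pow types" for n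
    using cover(2)[of n] tclass_outside_types[of _ n] by (auto simp: key_def cover_pattern_def)
  then have "range key \<subseteq> {..2 * N} \<times> Pow ({..<2 * N} \<times> {..<2 * N}) \<times> Pow types"
    by blast
  then have "finite (range key)"
    by (rule finite_subset) (simp add: types_def)
  then obtain r :: "nat \<Rightarrow> nat" where r: "strict_mono r" "\<And>n. key (r n) = key (r 0)"
    using strict_mono_const_subseq by blast
  have "finite types" by (simp add: types_def)
  from dickson[OF this, of "\<lambda>m T. card (tclass (r m) T)"]
  obtain m1 m2 where m: "m1 < m2" "\<forall>T\<in>types. card (tclass (r m1) T) \<le> card (tclass (r m2) T)"
    by blast
  define i j where "i = r m1" and "j = r m2"
  have "i < j" using r(1) m(1) by (simp add: i_def j_def strict_mono_def)
  have "key i = key j" unfolding i_def j_def by (metis r(2))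
  then have same_k: "k j = k i"
    and same_pattern: "cover_pattern (g i) (e i) (k i) = cover_pattern (g j) (e j) (k i)"
    and "{T. tclass i T \<noteq> {}} = {T. tclass j T \<noteq> {}}"
    unfolding key_def prod.inject by metis+
  then have same_empty: "tclass i T = {} \<longleftrightarrow> tclass j T = {}" for T
    by blast
  have fin_ij: "finite_graph (g i)" "finite_graph (g j)" using fin by auto
  interpret same_cover_pattern "g i" "g j" "e i" "e j" "k i"
    using fin_ij cover(1)[of i] cover(1)[of j] same_k same_pattern
    by unfold_locales (auto simp: finite_graph_def)
  have "card (tclass i T) \<le> card (tclass j T)" for T
    using m(2) tclass_outside_types[of T i] by (cases "T \<in> types") (auto simp: i_def j_def)
  then have "strong_hom_image_le (g i) (g j)"
    using fin_ij same_empty same_k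
    by (intro strong_hom_image_le_if_class_card_le) (auto simp: finite_graph_def tclass_def)
  with \<open>i < j\<close> show thesis by (rule that)
qed

subsection \<open>Descending chains\<close>

lemma inj_on_map_prod_edges:
  assumes "is_graph B" "inj_on f (verts B)"
  shows "inj_on (map_prod f f) (edges B)"
  using map_prod_inj_on[OF assms(2) assms(2)] by (rule inj_on_subset)
    (use assms(1) in \<open>simp add: is_graph_def\<close>)

lemma map_prod_edges_subset:
  assumes "graph_hom f B A"
  shows "map_prod f f ` edges B \<subseteq> edges A"
  using assms by (auto simp: graph_hom_def)

lemma strong_hom_image_le_if_bij_hom:
  assumes "finite_graph A" "is_graph B"
    and hom: "graph_hom f B A" and onto: "f ` verts B = verts A" and inj: "inj_on f (verts B)"
    and card_le: "card (edges A) \<le> card (edges B)"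
  shows "strong_hom_image_le B A"
proof -
  have subB: "edges B \<subseteq> verts B \<times> verts B" using assms(2) by (simp add: is_graph_def)
  have "finite (edges A)" using assms(1) by (rule finite_graph_finite_edges)
  have "card (map_prod f f ` edges B) = card (edges B)"
    using inj_on_map_prod_edges[OF assms(2) inj] by (rule card_image)
  with map_prod_edges_subset[OF hom] have edges_A: "edges A = map_prod f f ` edges B"
    using card_subset_eq[OF \<open>finite (edges A)\<close>] card_le card_mono[OF \<open>finite (edges A)\<close>]
    by (metis antisym)
  define g where "g = the_inv_into (verts B) f"
  have g_f: "g (f x) = x" if "x \<in> verts B" for x
    using inj that by (simp add: g_def the_inv_into_f_f)
  have g_onto: "g ` verts A = verts B"
    using inj onto by (simp add: g_def flip: onto)
  have "(g u, g w) \<in> edges B" if "(u, w) \<in> edges A" for u w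
    using that subB g_f by (auto simp: edges_A)
  moreover have "\<exists>u w. (u, w) \<in> edges A \<and> g u = x \<and> g w = y" if "(x, y) \<in> edges B" for x y
    using that subB g_f by (force simp: edges_A)
  ultimately have "strong_graph_hom g A B"
    using g_onto by (auto simp: strong_graph_hom_def graph_hom_def)
  with g_onto show ?thesis by (auto simp: strong_hom_image_le_def)
qed

definition graph_size :: "'a graph \<Rightarrow> nat \<times> nat" where
  "graph_size G = (card (verts G), card (verts G) * card (verts G) - card (edges G))"

lemma card_edges_le:
  assumes "finite_graph G"
  shows "card (edges G) \<le> card (verts G) * card (verts G)"
proof -
  have "card (edges G) \<le> card (verts G \<times> verts G)"
    using assms by (intro card_mono) (auto simp: finite_graph_def is_graph_def)
  then show ?thesis by (simp add: card_cartesian_product)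
qed

lemma graph_size_less_if_not_strong_hom_image_le:
  assumes A: "finite_graph A" and B: "finite_graph B"
    and le: "hom_image_le A B" and not_strong: "\<not> strong_hom_image_le B A"
  shows "(graph_size A, graph_size B) \<in> less_than <*lex*> less_than"
proof -
  obtain f where hom: "graph_hom f B A" and onto: "f ` verts B = verts A"
    using le by (auto simp: hom_image_le_def)
  have fin: "finite (verts B)" using B by (simp add: finite_graph_def)
  have "card (verts A) \<le> card (verts B)"
    using card_image_le[OF fin, of f] onto by simp
  moreover have "card (edges B) < card (edges A)" if same: "card (verts A) = card (verts B)"
  proof -
    have inj: "inj_on f (verts B)"
      using fin onto same by (intro eq_card_imp_inj_on) simp_all
    have "card (edges B) \<le> card (edges A)"
      using card_inj_on_le[OF inj_on_map_prod_edges map_prod_edges_subset[OF hom]]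
        finite_graph_finite_edges[OF A] B inj
      by (auto simp: finite_graph_def)
    moreover have "\<not> card (edges A) \<le> card (edges B)"
      using strong_hom_image_le_if_bij_hom[OF A _ hom onto inj] B not_strong
      by (auto simp: finite_graph_def)
    ultimately show ?thesis by simp
  qed
  ultimately show ?thesis
    using card_edges_le[OF A] by (auto simp: graph_size_def)
qed

lemma wqo_on_class_if_between_strong_and_hom:
  fixes C :: "'a graph set" and le :: "'a graph \<Rightarrow> 'a graph \<Rightarrow> bool"
  assumes fin: "\<forall>G \<in> C. finite_graph G"
    and bound: "\<forall>G \<in> C. \<forall>M. disjoint_edge_set G M \<longrightarrow> card M \<le> N"
    and strong_le: "\<And>A B. strong_hom_image_le A B \<Longrightarrow> le A B"
    and le_hom: "\<And>A B. le A B \<Longrightarrow> hom_image_le A B"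
  shows "wqo_on_class le C"
  unfolding wqo_on_class_def
proof (intro conjI notI; elim exE conjE)
  fix g :: "nat \<Rightarrow> 'a graph"
  assume g: "\<forall>i. g i \<in> C" and desc: "\<forall>i. le (g (Suc i)) (g i) \<and> \<not> le (g i) (g (Suc i))"
  have "(graph_size (g (Suc i)), graph_size (g i)) \<in> less_than <*lex*> less_than" for i
  proof (rule graph_size_less_if_not_strong_hom_image_le)
    show "finite_graph (g (Suc i))" "finite_graph (g i)" using fin g by blast+
    show "hom_image_le (g (Suc i)) (g i)" using le_hom desc by blast
    show "\<not> strong_hom_image_le (g i) (g (Suc i))" using strong_le desc by blast
  qed
  then have "\<exists>h. \<forall>i. (h (Suc i), h i) \<in> less_than <*lex*> less_than"
    by (intro exI[of _ "\<lambda>i. graph_size (g i)"] allI)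
  moreover have "wf (less_than <*lex*> less_than)" by blast
  ultimately show False
    unfolding wf_iff_no_infinite_down_chain by blast
next
  fix g :: "nat \<Rightarrow> 'a graph"
  assume g: "\<forall>i. g i \<in> C" and antichain: "\<forall>i j. i \<noteq> j \<longrightarrow> \<not> le (g i) (g j)"
  obtain i j where "i < j" "strong_hom_image_le (g i) (g j)"
    using strong_hom_image_le_good_pair[of g N] fin bound g by metis
  then have "i \<noteq> j" "le (g i) (g j)" using strong_le by simp_all
  with antichain show False by blast
qed

lemma strong_hom_image_le_imp_hom_image_le:
  "strong_hom_image_le A B \<Longrightarrow> hom_image_le A B"
  by (auto simp: strong_hom_image_le_def hom_image_le_def strong_graph_hom_def)

theorem corollary2p9:
  fixes C :: "'a graph set" and N :: nat
  assumes "\<forall>G \<in> C. finite_graph G"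
    and "\<forall>G \<in> C. \<forall>M. disjoint_edge_set G M \<longrightarrow> card M \<le> N"
  shows "wqo_on_class hom_image_le C \<and> wqo_on_class strong_hom_image_le C"
proof
  show "wqo_on_class hom_image_le C"
    by (rule wqo_on_class_if_between_strong_and_hom[OF assms])
      (simp_all add: strong_hom_image_le_imp_hom_image_le)
  show "wqo_on_class strong_hom_image_le C"
    by (rule wqo_on_class_if_between_strong_and_hom[OF assms])
      (simp_all add: strong_hom_image_le_imp_hom_image_le)
qed

end
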